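(* Let $n\ge p$, $\nu>0$, $\Psi\in\mathbb R^{n\times p}$, and define for $M\in\mathcal V_{n,p}$, $V\in\mathcal V_{p,p}$, $\boldsymbol d\in\mathbb R_+^p$ (with $D=\mathrm{diag}(\boldsymbol d)$) $$g(M,\boldsymbol d,V;\nu,\Psi)=\frac{\mathrm{etr}(\nu VDM^T\Psi)}{\left[{}_0F_1\!\left(\tfrac n2,\tfrac{D^2}{4}\right)\right]^\nu}.$$ (a) If $\|\Psi\|_2<1$, then $\int_{\mathcal V_{n,p}}\int_{\mathcal V_{p,p}}\int_{\mathbb R_+^p} g(M,\boldsymbol d,V;\nu,\Psi)\,d\boldsymbol d\,d\mu(V)\,d\mu(M)<\infty$. (b) If $\|\Psi\|_2>1$, then this integral equals $+\infty$.
   Context: $\mathcal V_{n,p}=\{X\in\mathbb R^{n\times p}:X^TX=I_p\}$; $\mu$ denotes the normalized Haar probability measure on $\mathcal V_{n,p}$ (resp. on $\mathcal V_{p,p}=O(p)$); $d\boldsymbol d$ is Lebesgue measure on $\mathbb R_+^p=(0,\infty)^p$. $\|\cdot\|_2$ is the spectral norm, $\mathrm{etr}(A)=\exp(\mathrm{tr}A)$. For diagonal $D$ with diagonal $\boldsymbol d$, ${}_0F_1\!\left(\tfrac n2,\tfrac{D^2}{4}\right)=\int_{\mathcal V_{n,p}}\exp\big(\sum_j d_jX_{jj}\big)[dX]$. *)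

theory Defs
  imports "HOL-Analysis.Analysis" "HOL-Probability.Probability"
begin

text \<open>Stiefel manifold V_{n,p} of n x p matrices with orthonormal columns
  (rows indexed by 'n, columns by 'p). For 'n = 'p this is O(p).\<close>
definition stiefel :: "(real^'p^'n) set" where
  "stiefel = {X. transpose X ** X = mat 1}"

definition haar_stiefel :: "(real^'p^'n) measure \<Rightarrow> bool" where
  "haar_stiefel \<mu> \<longleftrightarrow>
     sets \<mu> = sets borel \<and> prob_space \<mu> \<and> emeasure \<mu> stiefel = 1 \<and>
     (\<forall>Q::real^'n^'n. Q \<in> stiefel \<longrightarrow> distr \<mu> \<mu> (\<lambda>X. Q ** X) = \<mu>)"

definition diagm :: "real^'p \<Rightarrow> real^'p^'p" where
  "diagm d = (\<chi> i j. if i = j then d $ i else 0)"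

text \<open>0F1(n/2, D^2/4) = integral over V_{n,p} of exp(sum_j d_j X_{jj}).
  The "diagonal" entries X_{jj} are taken along an injection e of column indices
  into row indices (e j = j in the paper's convention).\<close>
definition hyp0F1 :: "(real^'p^'n) measure \<Rightarrow> ('p \<Rightarrow> 'n) \<Rightarrow> real^'p \<Rightarrow> real" where
  "hyp0F1 \<mu> e d = (\<integral>X. exp (\<Sum>j\<in>UNIV. d $ j * X $ e j $ j) \<partial>\<mu>)"

definition gdens :: "(real^'p^'n) measure \<Rightarrow> ('p \<Rightarrow> 'n) \<Rightarrow> real \<Rightarrow> real^'p^'n
     \<Rightarrow> real^'p^'n \<Rightarrow> real^'p \<Rightarrow> real^'p^'p \<Rightarrow> real" where
  "gdens \<mu> e \<nu> \<Psi> M d V =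
     exp (\<nu> * trace (V ** diagm d ** transpose M ** \<Psi>)) / (hyp0F1 \<mu> e d powr \<nu>)"

definition pos_orthant :: "(real^'p) set" where
  "pos_orthant = {d. \<forall>i. 0 < d $ i}"

end

theory Submission
  imports Defs
begin

text \<open>Write the exponent as \<open>\<nu> \<Sigma>\<^sub>j d\<^sub>j a\<^sub>j\<close> with \<open>a\<^sub>j = M\<^sub>j \<bullet> \<Psi> V\<^sub>j\<close> (columns of
  \<open>M\<close> and \<open>V\<close>); by Cauchy-Schwarz \<open>|a\<^sub>j| \<le> \<parallel>\<Psi>\<parallel>\<close>. The normalising constant \<open>0F1\<close> lies
  between \<open>c\<^sub>\<epsilon> exp ((1 - \<epsilon>) \<Sigma> d)\<close> and \<open>exp (\<Sigma> d)\<close>, where \<open>c\<^sub>\<epsilon>\<close> is the Haar measure of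
  the matrices whose diagonal entries all exceed \<open>1 - \<epsilon>\<close>; it is positive because Haar measure
  has full support, by compactness of the Stiefel manifold and transitivity of the orthogonal
  group. If \<open>\<parallel>\<Psi>\<parallel> < 1\<close> the integrand is thus dominated by \<open>C exp (- \<nu> \<epsilon> \<Sigma> d)\<close>, which is
  integrable over the orthant. If \<open>\<parallel>\<Psi>\<parallel> > 1\<close>, choose unit vectors \<open>u, v\<close> with
  \<open>u \<bullet> \<Psi> v > 1\<close>: for \<open>(M, V)\<close> in an open set of positive measure, where the \<open>j\<^sub>0\<close>-th columns are
  close to \<open>u\<close> and \<open>v\<close>, one has \<open>a\<^sub>j\<^sub>0 \<ge> 1\<close>, and then the integrand stays above a positive
  constant on the slab \<open>{d. \<forall>j \<noteq> j\<^sub>0. d\<^sub>j \<le> 1}\<close> of infinite volume.\<close>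

lemma stiefel_iff_orthonormal_columns:
  "X \<in> stiefel \<longleftrightarrow> (\<forall>i j. column i X \<bullet> column j X = (if i = j then 1 else 0))"
  unfolding stiefel_def matrix_mult_transpose_dot_column by (auto simp: vec_eq_iff mat_def)

lemma norm_column_stiefel: "X \<in> stiefel \<Longrightarrow> norm (column j X) = 1"
  by (simp add: stiefel_iff_orthonormal_columns norm_eq_1)

lemma abs_entry_stiefel_le_1:
  assumes "X \<in> stiefel" shows "\<bar>X $ i $ j\<bar> \<le> 1"
  using component_le_norm_cart[of "column j X" i] norm_column_stiefel[OF assms]
  by (simp add: column_def)

lemma stiefel_square_iff_orthogonal_matrix: "Q \<in> stiefel \<longleftrightarrow> orthogonal_matrix Q"
  by (simp add: stiefel_def orthogonal_matrix)

lemma stiefel_mult: "Q \<in> stiefel \<Longrightarrow> X \<in> stiefel \<Longrightarrow> Q ** X \<in> stiefel"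
  unfolding stiefel_def by (simp add: matrix_transpose_mul matrix_mul_assoc)
    (metis matrix_mul_assoc matrix_mul_lid)

lemma column_matrix_mult: "column j (Q ** Y) = Q *v column j Y"
  by (simp add: column_def matrix_matrix_mult_def matrix_vector_mult_def vec_eq_iff)

lemma continuous_on_matrix_mult_left: "continuous_on UNIV (\<lambda>X::real^'p^'n. Q ** X)"
  unfolding matrix_matrix_mult_def by (intro continuous_intros)

lemma compact_stiefel: "compact (stiefel :: (real^'p^'n) set)"
proof -
  have "continuous_on UNIV (\<lambda>X::real^'p^'n. transpose X ** X)"
    unfolding matrix_matrix_mult_def transpose_def by (intro continuous_intros)
  then have "closed (stiefel :: (real^'p^'n) set)"
    unfolding stiefel_def by (intro closed_Collect_eq continuous_intros) auto
  moreover have "norm X \<le> real CARD('n) * real CARD('p)" if X: "X \<in> stiefel" for X :: "real^'p^'n"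
  proof -
    have "norm (X $ i) \<le> real CARD('p)" for i
    proof -
      have "norm (X $ i) \<le> (\<Sum>j\<in>UNIV. \<bar>X $ i $ j\<bar>)" by (rule norm_le_l1_cart)
      also have "\<dots> \<le> (\<Sum>j\<in>(UNIV::'p set). 1)" by (intro sum_mono abs_entry_stiefel_le_1 X)
      finally show ?thesis by simp
    qed
    then have "(\<Sum>i\<in>UNIV. norm (X $ i)) \<le> (\<Sum>i\<in>(UNIV::'n set). real CARD('p))"
      by (intro sum_mono)
    moreover have "norm X \<le> (\<Sum>i\<in>UNIV. norm (X $ i))"
      unfolding norm_vec_def by (rule L2_set_le_sum) simp
    ultimately show ?thesis by simp
  qed
  then have "bounded (stiefel :: (real^'p^'n) set)" unfolding bounded_iff by blast
  ultimately show ?thesis by (simp add: compact_eq_bounded_closed)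
qed

section \<open>The orthogonal group acts transitively on the Stiefel manifold\<close>

lemma householder_reflection_exists:
  fixes a b :: "'a::real_inner"
  assumes "norm a = 1" "norm b = 1"
  obtains h where "orthogonal_transformation h" "h a = b"
    "\<And>x. (a - b) \<bullet> x = 0 \<Longrightarrow> h x = x"
proof (cases "a = b")
  case True
  then show ?thesis using that[of "\<lambda>x. x"] by auto
next
  case False
  define w where "w = a - b"
  have ww: "w \<bullet> w \<noteq> 0" using False by (simp add: w_def)
  define h where "h x = x - (2 * (w \<bullet> x) / (w \<bullet> w)) *\<^sub>R w" for x
  have "linear h" unfolding h_def
    by (auto simp: linear_iff inner_add_right add_divide_distrib algebra_simps scaleR_add_left)
  moreover have "h v \<bullet> h u = v \<bullet> u" for u v using ww
    unfolding h_def by (simp add: inner_diff_left inner_diff_right inner_commute field_simps power2_eq_square)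
  ultimately have "orthogonal_transformation h" by (simp add: orthogonal_transformation_def)
  moreover have "a \<bullet> a = 1" "b \<bullet> b = 1" using assms by (simp_all add: norm_eq_1)
  then have "h a = b" using ww unfolding h_def w_def
    by (simp add: inner_diff_left inner_diff_right inner_commute field_simps)
  ultimately show ?thesis using that by (auto simp: h_def w_def)
qed

lemma orthogonal_transformation_maps_orthonormal_family:
  fixes x y :: "'j \<Rightarrow> 'a::real_inner"
  assumes "finite J"
    and x: "\<And>i j. i \<in> J \<Longrightarrow> j \<in> J \<Longrightarrow> x i \<bullet> x j = (if i = j then 1 else 0)"
    and y: "\<And>i j. i \<in> J \<Longrightarrow> j \<in> J \<Longrightarrow> y i \<bullet> y j = (if i = j then 1 else 0)"
  shows "\<exists>f. orthogonal_transformation f \<and> (\<forall>j\<in>J. f (y j) = x j)"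
  using assms
proof (induction J rule: finite_induct)
  case empty
  show ?case by (intro exI[of _ "\<lambda>x. x"]) auto
next
  case (insert k J)
  then obtain f where f: "orthogonal_transformation f" "\<forall>j\<in>J. f (y j) = x j" by auto
  have "norm (f (y k)) = 1" "norm (x k) = 1"
    using f(1) insert.prems by (simp_all add: orthogonal_transformation norm_eq_1)
  then obtain h where h: "orthogonal_transformation h" "h (f (y k)) = x k"
      "\<And>z. (f (y k) - x k) \<bullet> z = 0 \<Longrightarrow> h z = z"
    using householder_reflection_exists by blast
  \<comment> \<open>the reflection fixes the images already placed, as they are orthogonal to \<open>f (y k)\<close> and \<open>x k\<close>\<close>
  have "h (f (y j)) = x j" if "j \<in> J" for j
  proof -
    have "f (y k) \<bullet> x j = 0" "x k \<bullet> x j = 0"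
      using f that insert by (metis orthogonal_transformation_def insertCI)+
    then show ?thesis using h(3) f(2) that by (simp add: inner_diff_left)
  qed
  moreover have "orthogonal_transformation (\<lambda>z. h (f z))"
    using orthogonal_transformation_compose[OF h(1) f(1)] by (simp add: o_def)
  ultimately show ?case using h(2) by (intro exI[of _ "\<lambda>z. h (f z)"]) auto
qed

lemma orthogonal_matrix_of_transformation:
  fixes f :: "real^'n \<Rightarrow> real^'n"
  assumes "orthogonal_transformation f"
  shows "orthogonal_matrix (matrix f)" "matrix f *v x = f x"
proof -
  have "linear f" "orthogonal_matrix (matrix f)"
    using assms by (auto simp: orthogonal_transformation_matrix)
  then show "orthogonal_matrix (matrix f)" "matrix f *v x = f x"
    using matrix_works[of f] by (simp_all add: linear_def scalar_mult_eq_scaleR)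
qed

lemma orthogonal_group_transitive_stiefel:
  fixes X Y :: "real^'p^'n"
  assumes X: "X \<in> stiefel" and Y: "Y \<in> stiefel"
  obtains Q :: "real^'n^'n" where "Q \<in> stiefel" "Q ** Y = X"
proof -
  obtain f where f: "orthogonal_transformation f" "\<forall>j. f (column j Y) = column j X"
    using orthogonal_transformation_maps_orthonormal_family[of UNIV "\<lambda>j. column j X" "\<lambda>j. column j Y"]
      X Y by (auto simp: stiefel_iff_orthonormal_columns)
  then have "column j (matrix f ** Y) = column j X" for j
    by (simp add: column_matrix_mult orthogonal_matrix_of_transformation)
  then have "matrix f ** Y = X" by (simp add: vec_eq_iff column_def)
  then show ?thesis
    using that orthogonal_matrix_of_transformation(1)[OF f(1)] stiefel_square_iff_orthogonal_matrix
    by blast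
qed

lemma stiefel_column_exists:
  fixes X :: "real^'p^'n"
  assumes "X \<in> stiefel" "norm u = 1"
  obtains Y :: "real^'p^'n" where "Y \<in> stiefel" "column j Y = u"
proof -
  obtain f where "orthogonal_transformation f" "f (column j X) = u"
    using orthogonal_transformation_exists_1[OF norm_column_stiefel[OF assms(1)] assms(2)] by blast
  then have "matrix f ** X \<in> stiefel" "column j (matrix f ** X) = u"
    using orthogonal_matrix_of_transformation[of f] assms(1)
    by (simp_all add: stiefel_mult stiefel_square_iff_orthogonal_matrix column_matrix_mult)
  then show ?thesis using that by blast
qed

section \<open>Haar measure on the Stiefel manifold\<close>

lemma haar_stiefelD:
  fixes \<mu> :: "(real^'p^'n) measure"
  assumes "haar_stiefel \<mu>"
  shows "prob_space \<mu>" "sets \<mu> = sets borel" "space \<mu> = UNIV" "emeasure \<mu> stiefel = 1"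
    and "AE X in \<mu>. X \<in> stiefel"
proof -
  show p: "prob_space \<mu>" and s: "sets \<mu> = sets borel"
    using assms by (auto simp: haar_stiefel_def)
  interpret prob_space \<mu> by (rule p)
  show sp: "space \<mu> = UNIV" using sets_eq_imp_space_eq[OF s] by simp
  have "stiefel \<in> sets \<mu>"
    using s borel_closed[OF compact_imp_closed[OF compact_stiefel]] by simp
  moreover show "emeasure \<mu> stiefel = 1" using assms by (simp add: haar_stiefel_def)
  ultimately show "AE X in \<mu>. X \<in> stiefel"
    by (simp add: AE_in_set_eq_1 emeasure_eq_measure)
qed

lemma haar_stiefel_sets_open: "haar_stiefel \<mu> \<Longrightarrow> open U \<Longrightarrow> U \<in> sets \<mu>"
  using haar_stiefelD(2) by (metis borel_open)

lemma haar_stiefel_left_invariant: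
  fixes \<mu> :: "(real^'p^'n) measure"
  assumes h: "haar_stiefel \<mu>" and Q: "Q \<in> stiefel" and B: "B \<in> sets \<mu>"
  shows "emeasure \<mu> ((\<lambda>X. Q ** X) -` B) = emeasure \<mu> B"
proof -
  have "(\<lambda>X. Q ** X) \<in> measurable \<mu> \<mu>"
    using borel_measurable_continuous_onI[OF continuous_on_matrix_mult_left]
      measurable_cong_sets[OF haar_stiefelD(2)[OF h] haar_stiefelD(2)[OF h]] by blast
  then have "emeasure (distr \<mu> \<mu> (\<lambda>X. Q ** X)) B = emeasure \<mu> ((\<lambda>X. Q ** X) -` B)"
    using B haar_stiefelD(3)[OF h] by (simp add: emeasure_distr)
  then show ?thesis using h Q by (simp add: haar_stiefel_def)
qed

text \<open>Finitely many rotated copies of a null neighbourhood of a point would cover the compact,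
  homogeneous Stiefel manifold, which has measure 1.\<close>
lemma haar_stiefel_open_pos:
  fixes \<mu> :: "(real^'p^'n) measure"
  assumes h: "haar_stiefel \<mu>" and X0: "X0 \<in> stiefel" and U: "open U" "X0 \<in> U"
  shows "0 < emeasure \<mu> U"
proof (rule ccontr)
  assume "\<not> 0 < emeasure \<mu> U"
  then have null: "emeasure \<mu> U = 0" by simp
  define Qf where "Qf Y = (SOME Q. Q \<in> stiefel \<and> Q ** Y = X0)" for Y :: "real^'p^'n"
  have Qf: "Qf Y \<in> stiefel \<and> Qf Y ** Y = X0" if "Y \<in> stiefel" for Y
    unfolding Qf_def by (rule someI_ex) (use orthogonal_group_transitive_stiefel[OF X0 that] in blast)
  define C where "C Y = (\<lambda>X. Qf Y ** X) -` U" for Y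
  have open_C: "open (C Y)" for Y
    unfolding C_def using continuous_on_matrix_mult_left U(1)
    by (simp add: continuous_on_open_vimage) blast
  have "stiefel \<subseteq> (\<Union>Y\<in>stiefel. C Y)"
    using Qf U(2) by (auto simp: C_def)
  then obtain K where K: "finite K" "K \<subseteq> stiefel" "stiefel \<subseteq> (\<Union>Y\<in>K. C Y)"
    using compactE_image[OF compact_stiefel, of stiefel C] open_C by metis
  have "C Y \<in> sets \<mu>" for Y using haar_stiefel_sets_open[OF h open_C] .
  moreover have "emeasure \<mu> (C Y) = 0" if "Y \<in> K" for Y
    using haar_stiefel_left_invariant[OF h _ haar_stiefel_sets_open[OF h U(1)], of "Qf Y"]
      Qf[of Y] that K(2) null by (auto simp: C_def)
  ultimately have "emeasure \<mu> (\<Union>Y\<in>K. C Y) = 0"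
    using emeasure_subadditive_finite[OF K(1), of C \<mu>] by (simp add: image_subset_iff)
  moreover have "emeasure \<mu> stiefel \<le> emeasure \<mu> (\<Union>Y\<in>K. C Y)"
    using K(3) open_C by (intro emeasure_mono haar_stiefel_sets_open[OF h]) auto
  ultimately show False using haar_stiefelD(4)[OF h] by simp
qed

section \<open>Bounds for the hypergeometric function \<open>\<^sub>0F\<^sub>1\<close>\<close>

lemma abs_diag_sum_stiefel_le:
  assumes "X \<in> stiefel"
  shows "\<bar>\<Sum>j\<in>UNIV. d $ j * X $ e j $ j\<bar> \<le> (\<Sum>j\<in>UNIV. \<bar>d $ j\<bar>)"
proof -
  have "\<bar>\<Sum>j\<in>UNIV. d $ j * X $ e j $ j\<bar> \<le> (\<Sum>j\<in>UNIV. \<bar>d $ j\<bar> * \<bar>X $ e j $ j\<bar>)"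
    using sum_abs[of "\<lambda>j. d $ j * X $ e j $ j" UNIV] by (simp add: abs_mult)
  also have "\<dots> \<le> (\<Sum>j\<in>UNIV. \<bar>d $ j\<bar>)"
    using abs_entry_stiefel_le_1[OF assms] by (intro sum_mono) (simp add: mult_left_le)
  finally show ?thesis .
qed

lemma integrable_hyp0F1_integrand:
  fixes \<mu> :: "(real^'p^'n) measure"
  assumes h: "haar_stiefel \<mu>"
  shows "integrable \<mu> (\<lambda>X. exp (\<Sum>j\<in>UNIV. d $ j * X $ e j $ j))"
proof -
  interpret prob_space \<mu> by (rule haar_stiefelD(1)[OF h])
  have "continuous_on UNIV (\<lambda>X::real^'p^'n. exp (\<Sum>j\<in>UNIV. d $ j * X $ e j $ j))"
    by (intro continuous_intros)
  then have "(\<lambda>X. exp (\<Sum>j\<in>UNIV. d $ j * X $ e j $ j)) \<in> borel_measurable \<mu>"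
    using measurable_cong_sets[OF haar_stiefelD(2)[OF h] refl]
      borel_measurable_continuous_onI by blast
  moreover have "AE X in \<mu>. norm (exp (\<Sum>j\<in>UNIV. d $ j * X $ e j $ j))
                              \<le> norm (exp (\<Sum>j\<in>UNIV. \<bar>d $ j\<bar>))"
    using haar_stiefelD(5)[OF h] by eventually_elim (auto intro!: abs_le_D1 abs_diag_sum_stiefel_le)
  ultimately show ?thesis
    by (rule Bochner_Integration.integrable_bound[OF integrable_const])
qed

lemma hyp0F1_pos:
  assumes h: "haar_stiefel \<mu>"
  shows "0 < hyp0F1 \<mu> e d"
proof -
  interpret prob_space \<mu> by (rule haar_stiefelD(1)[OF h])
  have "AE X in \<mu>. exp (- (\<Sum>j\<in>UNIV. \<bar>d $ j\<bar>)) \<le> exp (\<Sum>j\<in>UNIV. d $ j * X $ e j $ j)"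
    using haar_stiefelD(5)[OF h]
  proof eventually_elim
    case (elim X)
    from abs_diag_sum_stiefel_le[OF elim, of d e] show ?case by (simp add: abs_le_iff)
  qed
  then have "exp (- (\<Sum>j\<in>UNIV. \<bar>d $ j\<bar>)) \<le> hyp0F1 \<mu> e d"
    unfolding hyp0F1_def
    using integral_mono_AE[OF integrable_const integrable_hyp0F1_integrand[OF h]] prob_space by simp
  then show ?thesis by (rule less_le_trans[OF exp_gt_zero])
qed

lemma hyp0F1_le_exp_sum:
  assumes h: "haar_stiefel \<mu>" and d: "\<forall>j. 0 \<le> d $ j"
  shows "hyp0F1 \<mu> e d \<le> exp (\<Sum>j\<in>UNIV. d $ j)"
proof -
  interpret prob_space \<mu> by (rule haar_stiefelD(1)[OF h])
  have "AE X in \<mu>. exp (\<Sum>j\<in>UNIV. d $ j * X $ e j $ j) \<le> exp (\<Sum>j\<in>UNIV. d $ j)"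
    using haar_stiefelD(5)[OF h]
  proof eventually_elim
    case (elim X)
    have "d $ j * X $ e j $ j \<le> d $ j" for j
      using abs_entry_stiefel_le_1[OF elim, of "e j" j] d by (simp add: mult_left_le)
    then show ?case by (simp add: sum_mono)
  qed
  then show ?thesis
    unfolding hyp0F1_def
    using integral_mono_AE[OF integrable_hyp0F1_integrand[OF h] integrable_const] prob_space by simp
qed

definition diag_near_one :: "('p \<Rightarrow> 'n) \<Rightarrow> real \<Rightarrow> (real^'p^'n) set" where
  "diag_near_one e \<epsilon> = {X. \<forall>j. 1 - \<epsilon> < X $ e j $ j}"

lemma open_diag_near_one:
  fixes e :: "'p::finite \<Rightarrow> 'n::finite"
  shows "open (diag_near_one e \<epsilon>)"
proof -
  have "open {X::real^'p^'n. 1 - \<epsilon> < X $ e j $ j}" for j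
    by (intro open_Collect_less continuous_on_component continuous_on_id continuous_on_const)
  then show ?thesis unfolding diag_near_one_def Collect_all_eq by (intro open_INT) auto
qed

lemma hyp0F1_ge:
  fixes \<mu> :: "(real^'p^'n) measure"
  assumes h: "haar_stiefel \<mu>" and d: "\<forall>j. 0 \<le> d $ j"
  shows "measure \<mu> (diag_near_one e \<epsilon>) * exp ((1 - \<epsilon>) * (\<Sum>j\<in>UNIV. d $ j)) \<le> hyp0F1 \<mu> e d"
proof -
  interpret prob_space \<mu> by (rule haar_stiefelD(1)[OF h])
  let ?U = "diag_near_one e \<epsilon>"
  have U: "?U \<in> sets \<mu>" by (rule haar_stiefel_sets_open[OF h open_diag_near_one])
  have "exp ((1 - \<epsilon>) * (\<Sum>j\<in>UNIV. d $ j)) * indicator ?U X \<le> exp (\<Sum>j\<in>UNIV. d $ j * X $ e j $ j)"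
    for X :: "real^'p^'n"
  proof (cases "X \<in> ?U")
    case True
    then have "1 - \<epsilon> \<le> X $ e j $ j" for j by (simp add: diag_near_one_def less_imp_le)
    then have "(1 - \<epsilon>) * d $ j \<le> d $ j * X $ e j $ j" for j
      using d by (simp add: mult.commute mult_left_mono)
    then have "(1 - \<epsilon>) * (\<Sum>j\<in>UNIV. d $ j) \<le> (\<Sum>j\<in>UNIV. d $ j * X $ e j $ j)"
      by (simp add: sum_distrib_left sum_mono)
    then show ?thesis using True by simp
  qed simp
  then have "(\<integral>X. exp ((1 - \<epsilon>) * (\<Sum>j\<in>UNIV. d $ j)) * indicator ?U X \<partial>\<mu>) \<le> hyp0F1 \<mu> e d"
    unfolding hyp0F1_def
    by (intro integral_mono integrable_real_mult_indicator[OF U integrable_const]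
        integrable_hyp0F1_integrand[OF h])
  then show ?thesis using U by (simp add: mult.commute)
qed

definition embedding_matrix :: "('p \<Rightarrow> 'n) \<Rightarrow> real^'p^'n" where
  "embedding_matrix e = (\<chi> i j. if i = e j then 1 else 0)"

lemma column_embedding_matrix: "column j (embedding_matrix e) = axis (e j) 1"
  by (simp add: embedding_matrix_def column_def axis_def vec_eq_iff)

lemma embedding_matrix_stiefel: "inj e \<Longrightarrow> embedding_matrix e \<in> stiefel"
  unfolding stiefel_iff_orthonormal_columns column_embedding_matrix inner_axis_axis
  by (simp add: inj_eq)

lemma measure_diag_near_one_pos:
  assumes h: "haar_stiefel \<mu>" and "inj e" and "0 < \<epsilon>"
  shows "0 < measure \<mu> (diag_near_one e \<epsilon>)"
proof -
  interpret prob_space \<mu> by (rule haar_stiefelD(1)[OF h])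
  have "embedding_matrix e \<in> diag_near_one e \<epsilon>"
    using \<open>0 < \<epsilon>\<close> by (simp add: diag_near_one_def embedding_matrix_def)
  then have "0 < emeasure \<mu> (diag_near_one e \<epsilon>)"
    using haar_stiefel_open_pos[OF h embedding_matrix_stiefel[OF \<open>inj e\<close>] open_diag_near_one]
    by blast
  then show ?thesis by (simp add: emeasure_eq_measure)
qed

definition trace_coeff :: "real^'p^'n \<Rightarrow> real^'p^'n \<Rightarrow> real^'p^'p \<Rightarrow> 'p \<Rightarrow> real" where
  "trace_coeff \<Psi> M V j = column j M \<bullet> (\<Psi> *v column j V)"

lemma trace_diagm_eq:
  fixes \<Psi> M :: "real^'p^'n" and V :: "real^'p^'p"
  shows "trace (V ** diagm d ** transpose M ** \<Psi>) = (\<Sum>j\<in>UNIV. d $ j * trace_coeff \<Psi> M V j)"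
proof -
  have entry: "((transpose M ** \<Psi>) ** V) $ j $ j = trace_coeff \<Psi> M V j" for j
  proof -
    have "((transpose M ** \<Psi>) ** V) $ j $ j = (\<Sum>k\<in>UNIV. \<Sum>l\<in>UNIV. M $ l $ j * \<Psi> $ l $ k * V $ k $ j)"
      unfolding matrix_matrix_mult_def transpose_def by (simp add: sum_distrib_right)
    also have "\<dots> = (\<Sum>l\<in>UNIV. \<Sum>k\<in>UNIV. M $ l $ j * \<Psi> $ l $ k * V $ k $ j)"
      by (rule sum.swap)
    finally show ?thesis
      unfolding trace_coeff_def column_def inner_vec_def matrix_vector_mult_def
      by (simp add: sum_distrib_left mult.assoc)
  qed
  have "trace (V ** diagm d ** transpose M ** \<Psi>) = trace (((transpose M ** \<Psi>) ** V) ** diagm d)"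
    by (metis matrix_mul_assoc trace_mul_sym)
  also have "\<dots> = (\<Sum>j\<in>UNIV. ((transpose M ** \<Psi>) ** V) $ j $ j * d $ j)"
    unfolding trace_def matrix_matrix_mult_def diagm_def
    by (simp add: if_distrib if_distribR cong: if_cong)
  finally show ?thesis by (simp add: entry mult.commute)
qed

lemma gdens_eq:
  "gdens \<mu> e \<nu> \<Psi> M d V = exp (\<nu> * (\<Sum>j\<in>UNIV. d $ j * trace_coeff \<Psi> M V j)) / hyp0F1 \<mu> e d powr \<nu>"
  by (simp add: gdens_def trace_diagm_eq)

lemma abs_trace_coeff_le_onorm:
  assumes "M \<in> stiefel" "V \<in> stiefel"
  shows "\<bar>trace_coeff \<Psi> M V j\<bar> \<le> onorm (\<lambda>x. \<Psi> *v x)"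
proof -
  have "\<bar>trace_coeff \<Psi> M V j\<bar> \<le> norm (column j M) * norm (\<Psi> *v column j V)"
    unfolding trace_coeff_def by (rule Cauchy_Schwarz_ineq2)
  also have "\<dots> \<le> onorm (\<lambda>x. \<Psi> *v x) * norm (column j V)"
    using norm_column_stiefel[OF assms(1)] by (simp add: onorm)
  finally show ?thesis using norm_column_stiefel[OF assms(2)] by simp
qed

lemma inner_matrix_vector_ge_perturbed:
  fixes \<Psi> :: "real^'p^'n"
  assumes "norm u = 1" "norm w = 1"
  shows "u \<bullet> (\<Psi> *v v) - (norm (m - u) + norm (w - v)) * onorm (\<lambda>x. \<Psi> *v x) \<le> m \<bullet> (\<Psi> *v w)"
proof -
  let ?s = "onorm (\<lambda>x. \<Psi> *v x)"
  have "\<bar>(m - u) \<bullet> (\<Psi> *v w)\<bar> \<le> norm (m - u) * norm (\<Psi> *v w)" by (rule Cauchy_Schwarz_ineq2)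
  also have "\<dots> \<le> norm (m - u) * ?s"
    using onorm[of "\<lambda>x. \<Psi> *v x" w] assms(2) by (simp add: mult_left_mono)
  finally have 1: "\<bar>(m - u) \<bullet> (\<Psi> *v w)\<bar> \<le> norm (m - u) * ?s" .
  have "\<bar>u \<bullet> (\<Psi> *v (w - v))\<bar> \<le> norm u * norm (\<Psi> *v (w - v))" by (rule Cauchy_Schwarz_ineq2)
  also have "\<dots> \<le> ?s * norm (w - v)"
    using onorm[of "\<lambda>x. \<Psi> *v x" "w - v"] assms(1) by simp
  finally have 2: "\<bar>u \<bullet> (\<Psi> *v (w - v))\<bar> \<le> ?s * norm (w - v)" .
  have "m \<bullet> (\<Psi> *v w) = u \<bullet> (\<Psi> *v v) + (m - u) \<bullet> (\<Psi> *v w) + u \<bullet> (\<Psi> *v (w - v))"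
    by (simp add: inner_diff_left inner_diff_right matrix_vector_mult_diff_distrib)
  then show ?thesis using 1 2 by (simp add: algebra_simps abs_le_iff)
qed

section \<open>Integrals over the positive orthant\<close>

lemma prod_Basis_inner_cart:
  fixes g :: "real \<Rightarrow> 'b::comm_monoid_mult" and x :: "real^'p"
  shows "(\<Prod>b\<in>Basis. g (x \<bullet> b)) = (\<Prod>j\<in>UNIV. g (x $ j))"
  by (simp add: Basis_vec_def cart_eq_inner_axis axis_eq_axis prod.UNION_disjoint)

lemma pos_orthant_borel [measurable]: "pos_orthant \<in> sets borel"
proof -
  have "open {d::real^'p. 0 < d $ j}" for j
    by (intro open_Collect_less continuous_on_component continuous_on_id continuous_on_const)
  then have "open (pos_orthant :: (real^'p) set)"
    unfolding pos_orthant_def Collect_all_eq by (intro open_INT) auto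
  then show ?thesis by (rule borel_open)
qed

text \<open>On the orthant the integrand is a multiple of a product of exponential densities.\<close>
lemma nn_integral_orthant_exp_le:
  assumes k: "0 < \<kappa>"
  shows "(\<integral>\<^sup>+ d. indicator pos_orthant d * ennreal (exp (- \<kappa> * (\<Sum>j\<in>UNIV. d $ j)))
           \<partial>(lborel :: (real^'p) measure)) \<le> ennreal (1 / \<kappa> ^ CARD('p))"
proof -
  let ?c = "ennreal (1 / \<kappa> ^ CARD('p))"
  let ?dens = "\<lambda>d::real^'p. \<Prod>b\<in>Basis. ennreal (exponential_density \<kappa> (d \<bullet> b))"
  have dens: "?dens d = ennreal (\<kappa> ^ CARD('p) * exp (- \<kappa> * (\<Sum>j\<in>UNIV. d $ j)))"
    if "d \<in> pos_orthant" for d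
  proof -
    have "exponential_density \<kappa> (d $ j) = \<kappa> * exp (- \<kappa> * d $ j)" for j
      using spec[OF that[unfolded pos_orthant_def mem_Collect_eq], of j]
      by (simp add: exponential_density_def mult.commute)
    then have "?dens d = (\<Prod>j\<in>UNIV. ennreal (\<kappa> * exp (- \<kappa> * d $ j)))"
      using prod_Basis_inner_cart[where g="\<lambda>x. ennreal (exponential_density \<kappa> x)" and x=d] by simp
    also have "\<dots> = ennreal (\<Prod>j\<in>UNIV. \<kappa> * exp (- \<kappa> * d $ j))"
      using k by (simp add: prod_ennreal less_imp_le)
    finally show ?thesis by (simp add: prod.distrib exp_sum sum_distrib_left)
  qed
  have pointwise: "indicator pos_orthant d * ennreal (exp (- \<kappa> * (\<Sum>j\<in>UNIV. d $ j))) \<le> ?c * ?dens d"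
    for d
    using k by (cases "d \<in> pos_orthant") (simp_all add: dens ennreal_mult[symmetric])
  have "(\<integral>\<^sup>+ d. indicator pos_orthant d * ennreal (exp (- \<kappa> * (\<Sum>j\<in>UNIV. d $ j)))
           \<partial>(lborel :: (real^'p) measure)) \<le> (\<integral>\<^sup>+ d. ?c * ?dens d \<partial>lborel)"
    by (rule nn_integral_mono) (rule pointwise)
  also have "\<dots> = ?c * (\<integral>\<^sup>+ d. ?dens d \<partial>lborel)"
    by (rule nn_integral_cmult) measurable
  also have "(\<integral>\<^sup>+ d. ?dens d \<partial>lborel) = (\<Prod>b\<in>(Basis :: (real^'p) set). \<integral>\<^sup>+ x. exponential_density \<kappa> x \<partial>lborel)"
    by (rule nn_integral_lborel_prod) auto
  also have "(\<integral>\<^sup>+ x. exponential_density \<kappa> x \<partial>lborel) = 1"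
    using prob_space.emeasure_space_1[OF prob_space_exponential_density[OF k]]
    by (simp add: emeasure_density)
  finally show ?thesis by simp
qed

lemma nn_integral_orthant_infinite:
  fixes g :: "real^'p \<Rightarrow> real"
  assumes c: "0 < c"
    and lb: "\<And>d. \<forall>j. 0 < d $ j \<and> (j \<noteq> k \<longrightarrow> d $ j \<le> 1) \<Longrightarrow> c \<le> g d"
  shows "(\<integral>\<^sup>+ d. indicator pos_orthant d * ennreal (g d) \<partial>lborel) = \<infinity>"
proof (rule ccontr)
  let ?I = "\<integral>\<^sup>+ d. indicator pos_orthant d * ennreal (g d) \<partial>lborel"
  have bound: "ennreal (c * real n) \<le> ?I" for n
  proof -
    define b :: "real^'p" where "b = (\<chi> j. if j = k then real n else 1)"
    have "(\<Prod>v\<in>Basis. b \<bullet> v) = (\<Prod>j\<in>UNIV. b $ j)"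
      by (rule prod_Basis_inner_cart[where g="\<lambda>x. x"])
    also have "\<dots> = real n"
      by (simp add: b_def prod.remove[of UNIV k] prod.neutral)
    finally have "emeasure lborel (box 0 b) = ennreal (real n)"
      by (subst emeasure_lborel_box) (auto simp: Basis_vec_def inner_axis b_def)
    then have "ennreal (c * real n) = (\<integral>\<^sup>+ d. ennreal c * indicator (box 0 b) d \<partial>lborel)"
      using c by (simp add: nn_integral_cmult_indicator ennreal_mult)
    also have "\<dots> \<le> ?I"
    proof (rule nn_integral_mono)
      fix d :: "real^'p"
      have "0 < d $ j \<and> (j \<noteq> k \<longrightarrow> d $ j \<le> 1)" if "d \<in> box 0 b" for j
        using that by (auto simp: mem_box_cart b_def split: if_splits dest: spec[of _ j])
      then show "ennreal c * indicator (box 0 b) d \<le> indicator pos_orthant d * ennreal (g d)"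
        using lb[of d] by (auto simp: pos_orthant_def indicator_def ennreal_leI)
    qed
    finally show ?thesis .
  qed
  assume "?I \<noteq> \<infinity>"
  then obtain r where r: "?I = ennreal r" "0 \<le> r" by (cases ?I) auto
  obtain n where "r / c < real n" using reals_Archimedean2 by blast
  then have "r < c * real n" using c by (simp add: field_simps)
  then show False using bound[of n] r c by (simp add: ennreal_le_iff)
qed

lemma nn_integral_infinite_if_infinite_on_pos_set:
  assumes "A \<in> sets M" "0 < emeasure M A" "AE x in M. x \<in> A \<longrightarrow> f x = \<infinity>"
  shows "(\<integral>\<^sup>+ x. f x \<partial>M) = \<infinity>"
proof -
  have "\<infinity> * emeasure M A = (\<integral>\<^sup>+ x. \<infinity> * indicator A x \<partial>M)"
    using assms(1) by (rule nn_integral_cmult_indicator[symmetric])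
  also have "\<dots> \<le> (\<integral>\<^sup>+ x. f x \<partial>M)"
    using assms(3) by (intro nn_integral_mono_AE) (auto split: split_indicator elim: eventually_mono)
  finally show ?thesis using assms(2) by (simp add: top_unique)
qed

lemma gdens_le:
  fixes \<mu> :: "(real^'p^'n) measure"
  assumes h: "haar_stiefel \<mu>" and nu: "0 < \<nu>" and M: "M \<in> stiefel" and V: "V \<in> stiefel"
    and d: "\<forall>j. 0 \<le> d $ j" and m: "0 < measure \<mu> (diag_near_one e \<epsilon>)"
  shows "gdens \<mu> e \<nu> \<Psi> M d V \<le> measure \<mu> (diag_near_one e \<epsilon>) powr (- \<nu>)
           * exp (- \<nu> * (1 - \<epsilon> - onorm (\<lambda>x. \<Psi> *v x)) * (\<Sum>j\<in>UNIV. d $ j))"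
proof -
  define s where "s = onorm (\<lambda>x. \<Psi> *v x)"
  define S where "S = (\<Sum>j\<in>UNIV. d $ j)"
  define m where "m = measure \<mu> (diag_near_one e \<epsilon>)"
  have "trace_coeff \<Psi> M V j \<le> s" for j
    using abs_trace_coeff_le_onorm[OF M V, of \<Psi> j] by (simp add: s_def abs_le_iff)
  then have "d $ j * trace_coeff \<Psi> M V j \<le> s * d $ j" for j
    using mult_left_mono[of "trace_coeff \<Psi> M V j" s "d $ j"] d by (simp add: mult.commute)
  then have "(\<Sum>j\<in>UNIV. d $ j * trace_coeff \<Psi> M V j) \<le> s * S"
    unfolding S_def sum_distrib_left by (rule sum_mono)
  then have num: "exp (\<nu> * (\<Sum>j\<in>UNIV. d $ j * trace_coeff \<Psi> M V j)) \<le> exp (\<nu> * (s * S))"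
    using nu by simp
  have "m powr \<nu> * exp ((1 - \<epsilon>) * S * \<nu>) = (m * exp ((1 - \<epsilon>) * S)) powr \<nu>"
    using m by (simp add: m_def powr_mult exp_powr_real)
  also have "\<dots> \<le> hyp0F1 \<mu> e d powr \<nu>"
    using hyp0F1_ge[OF h d, of e \<epsilon>] m nu by (intro powr_mono2) (auto simp: m_def S_def)
  finally have den: "m powr \<nu> * exp ((1 - \<epsilon>) * S * \<nu>) \<le> hyp0F1 \<mu> e d powr \<nu>" .
  have "gdens \<mu> e \<nu> \<Psi> M d V \<le> exp (\<nu> * (s * S)) / (m powr \<nu> * exp ((1 - \<epsilon>) * S * \<nu>))"
    unfolding gdens_eq using num den m by (intro frac_le) (auto simp: m_def)
  also have "exp (\<nu> * (s * S)) = exp ((1 - \<epsilon>) * S * \<nu>) * exp (- \<nu> * (1 - \<epsilon> - s) * S)"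
    by (simp add: exp_add[symmetric] algebra_simps)
  finally show ?thesis using m by (simp add: m_def s_def S_def powr_minus field_simps)
qed

lemma gdens_ge:
  fixes \<mu> :: "(real^'p^'n) measure"
  assumes h: "haar_stiefel \<mu>" and nu: "0 < \<nu>" and M: "M \<in> stiefel" and V: "V \<in> stiefel"
    and coeff: "1 \<le> trace_coeff \<Psi> M V k"
    and d: "\<forall>j. 0 < d $ j \<and> (j \<noteq> k \<longrightarrow> d $ j \<le> 1)"
  shows "exp (- \<nu> * (onorm (\<lambda>x. \<Psi> *v x) + 1) * CARD('p)) \<le> gdens \<mu> e \<nu> \<Psi> M d V"
proof -
  define s where "s = onorm (\<lambda>x. \<Psi> *v x)"
  define S where "S = (\<Sum>j\<in>UNIV. d $ j)"
  define T where "T = (\<Sum>j\<in>UNIV. d $ j * trace_coeff \<Psi> M V j)"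
  have s: "0 \<le> s" unfolding s_def by (rule onorm_pos_le) simp
  \<comment> \<open>the term \<open>k\<close> is nonnegative, the others are bounded since \<open>d $ j \<le> 1\<close> there\<close>
  have "- (s + 1) \<le> d $ j * (trace_coeff \<Psi> M V j - 1)" for j
  proof (cases "j = k")
    case True
    have "0 \<le> d $ k * (trace_coeff \<Psi> M V k - 1)" using coeff spec[OF d, of k] by simp
    then show ?thesis using True s by simp
  next
    case False
    have "- s \<le> trace_coeff \<Psi> M V j"
      using abs_trace_coeff_le_onorm[OF M V, of \<Psi> j] by (simp add: s_def)
    then have "d $ j * (- (s + 1)) \<le> d $ j * (trace_coeff \<Psi> M V j - 1)"
      using d by (intro mult_left_mono) (auto simp: less_imp_le)
    moreover have "- (s + 1) \<le> d $ j * (- (s + 1))"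
      using d False s by (simp add: mult_le_cancel_right1)
    ultimately show ?thesis by linarith
  qed
  then have "- (s + 1) * CARD('p) \<le> T - S"
    using sum_mono[of UNIV "\<lambda>_. - (s + 1)" "\<lambda>j. d $ j * (trace_coeff \<Psi> M V j - 1)"]
    by (simp add: T_def S_def sum_subtractf algebra_simps)
  then have "\<nu> * (- (s + 1) * CARD('p)) \<le> \<nu> * (T - S)"
    by (rule mult_left_mono) (use nu in simp)
  then have "exp (- \<nu> * (s + 1) * CARD('p)) \<le> exp (\<nu> * T) / exp (S * \<nu>)"
    by (simp add: exp_diff[symmetric] algebra_simps)
  also have "\<dots> \<le> exp (\<nu> * T) / hyp0F1 \<mu> e d powr \<nu>"
  proof (intro divide_left_mono)
    have "hyp0F1 \<mu> e d powr \<nu> \<le> exp S powr \<nu>"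
      using hyp0F1_pos[OF h] hyp0F1_le_exp_sum[OF h] d nu
      by (intro powr_mono2) (auto simp: S_def less_imp_le)
    then show "hyp0F1 \<mu> e d powr \<nu> \<le> exp (S * \<nu>)" by (simp add: exp_powr_real)
  qed (use hyp0F1_pos[OF h, of e d] in auto)
  finally show ?thesis by (simp add: gdens_eq T_def s_def)
qed

lemma onorm_gt_1_obtain_unit:
  fixes \<Psi> :: "real^'p^'n"
  assumes "1 < onorm (\<lambda>x. \<Psi> *v x)"
  obtains v where "norm v = 1" "1 < norm (\<Psi> *v v)"
proof -
  obtain x where x: "norm x < norm (\<Psi> *v x)"
    using onorm_le[of "\<lambda>x. \<Psi> *v x" 1] assms by (force simp: not_less)
  then have "x \<noteq> 0" by auto
  then show ?thesis
    using that[of "x /\<^sub>R norm x"] x by (simp add: matrix_vector_mult_scaleR field_simps)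
qed

lemma trace_coeff_ge_1_near:
  fixes \<Psi> :: "real^'p^'n"
  assumes s1: "1 < onorm (\<lambda>x. \<Psi> *v x)" and X: "X \<in> (stiefel :: (real^'p^'n) set)"
  obtains j0 and U :: "(real^'p^'n) set" and W :: "(real^'p^'p) set"
  where "open U" "open W" "U \<inter> stiefel \<noteq> {}" "W \<inter> stiefel \<noteq> {}"
    "\<And>M V. M \<in> U \<inter> stiefel \<Longrightarrow> V \<in> W \<inter> stiefel \<Longrightarrow> 1 \<le> trace_coeff \<Psi> M V j0"
proof -
  define s where "s = onorm (\<lambda>x. \<Psi> *v x)"
  obtain v where v: "norm v = 1" "1 < norm (\<Psi> *v v)"
    using onorm_gt_1_obtain_unit[OF s1] by blast
  define \<sigma> where "\<sigma> = norm (\<Psi> *v v)"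
  define u where "u = (\<Psi> *v v) /\<^sub>R \<sigma>"
  have \<sigma>: "1 < \<sigma>" "norm (\<Psi> *v v) = \<sigma>" using v by (simp_all add: \<sigma>_def)
  then have u: "norm u = 1" "u \<bullet> (\<Psi> *v v) = \<sigma>"
    by (simp_all add: u_def dot_square_norm power2_eq_square)
  obtain j0 :: 'p where True by simp
  obtain M0 :: "real^'p^'n" where M0: "M0 \<in> stiefel" "column j0 M0 = u"
    using stiefel_column_exists[OF X u(1)] by blast
  obtain V0 :: "real^'p^'p" where V0: "V0 \<in> stiefel" "column j0 V0 = v"
    using stiefel_column_exists[OF _ v(1), of "mat 1"] by (auto simp: stiefel_def)
  define \<eta> where "\<eta> = (\<sigma> - 1) / (2 * s)"
  have \<eta>: "0 < \<eta>" using \<sigma>(1) s1 by (simp add: \<eta>_def s_def)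
  define U where "U = {M :: real^'p^'n. norm (column j0 M - u) < \<eta>}"
  define W where "W = {V :: real^'p^'p. norm (column j0 V - v) < \<eta>}"
  show ?thesis
  proof
    show "open U" "open W"
      unfolding U_def W_def column_def by (intro open_Collect_less continuous_intros)+
    have "M0 \<in> U \<inter> stiefel" "V0 \<in> W \<inter> stiefel"
      using M0 V0 \<eta> by (simp_all add: U_def W_def)
    then show "U \<inter> stiefel \<noteq> {}" "W \<inter> stiefel \<noteq> {}" by blast+
    fix M V assume "M \<in> U \<inter> stiefel" "V \<in> W \<inter> stiefel"
    then have "norm (column j0 M - u) + norm (column j0 V - v) \<le> 2 * \<eta>"
      "norm (column j0 V) = 1"
      by (auto simp: U_def W_def norm_column_stiefel)
    then have "\<sigma> - 2 * \<eta> * s \<le> trace_coeff \<Psi> M V j0"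
      using inner_matrix_vector_ge_perturbed[OF u(1), of "column j0 V" \<Psi> v "column j0 M"] u(2)
        onorm_pos_le[of "\<lambda>x. \<Psi> *v x"] mult_right_mono[of _ "2 * \<eta>" s]
      by (force simp: trace_coeff_def s_def)
    moreover have "2 * \<eta> * s = \<sigma> - 1" using s1 by (simp add: \<eta>_def s_def)
    ultimately show "1 \<le> trace_coeff \<Psi> M V j0" by linarith
  qed
qed

lemma nn_integral_gdens_finite:
  fixes \<mu>M :: "(real^'p^'n) measure" and \<mu>V :: "(real^'p^'p) measure"
  assumes e: "inj e" and hM: "haar_stiefel \<mu>M" and hV: "haar_stiefel \<mu>V"
    and nu: "0 < \<nu>" and s1: "onorm (\<lambda>x. \<Psi> *v x) < 1"
  shows "(\<integral>\<^sup>+ M. \<integral>\<^sup>+ V. \<integral>\<^sup>+ d. indicator pos_orthant d *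
               ennreal (gdens \<mu>M e \<nu> \<Psi> M d V) \<partial>lborel \<partial>\<mu>V \<partial>\<mu>M) < \<infinity>"
proof -
  define \<epsilon> where "\<epsilon> = (1 - onorm (\<lambda>x. \<Psi> *v x)) / 2"
  have \<epsilon>: "0 < \<epsilon>" using s1 by (simp add: \<epsilon>_def)
  define C where "C = measure \<mu>M (diag_near_one e \<epsilon>) powr (- \<nu>)"
  define K where "K = ennreal C * ennreal (1 / (\<nu> * \<epsilon>) ^ CARD('p))"
  have m: "0 < measure \<mu>M (diag_near_one e \<epsilon>)" by (rule measure_diag_near_one_pos[OF hM e \<epsilon>])
  have inner: "(\<integral>\<^sup>+ d. indicator pos_orthant d * ennreal (gdens \<mu>M e \<nu> \<Psi> M d V) \<partial>lborel) \<le> K"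
    if M: "M \<in> stiefel" and V: "V \<in> stiefel" for M V
  proof -
    have pointwise: "indicator pos_orthant d * ennreal (gdens \<mu>M e \<nu> \<Psi> M d V)
        \<le> ennreal C * (indicator pos_orthant d * ennreal (exp (- (\<nu> * \<epsilon>) * (\<Sum>j\<in>UNIV. d $ j))))" for d
    proof (cases "d \<in> pos_orthant")
      case True
      have eq: "1 - \<epsilon> - onorm (\<lambda>x. \<Psi> *v x) = \<epsilon>" by (simp add: \<epsilon>_def field_simps)
      have "\<forall>j. 0 \<le> d $ j" using True by (simp add: pos_orthant_def less_imp_le)
      then have "gdens \<mu>M e \<nu> \<Psi> M d V \<le> C * exp (- (\<nu> * \<epsilon>) * (\<Sum>j\<in>UNIV. d $ j))"
        using gdens_le[OF hM nu M V _ m, where \<Psi>=\<Psi>] unfolding eq C_def by simp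
      then show ?thesis using True by (simp add: ennreal_mult[symmetric] C_def ennreal_leI)
    qed simp
    have "(\<integral>\<^sup>+ d. indicator pos_orthant d * ennreal (gdens \<mu>M e \<nu> \<Psi> M d V) \<partial>lborel)
        \<le> (\<integral>\<^sup>+ d. ennreal C * (indicator pos_orthant d * ennreal (exp (- (\<nu> * \<epsilon>) * (\<Sum>j\<in>UNIV. d $ j))))
            \<partial>(lborel :: (real^'p) measure))"
      by (rule nn_integral_mono) (rule pointwise)
    also have "\<dots> = ennreal C * (\<integral>\<^sup>+ d. indicator pos_orthant d * ennreal (exp (- (\<nu> * \<epsilon>) * (\<Sum>j\<in>UNIV. d $ j)))
                          \<partial>(lborel :: (real^'p) measure))"
      by (rule nn_integral_cmult) measurable
    also have "\<dots> \<le> K"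
      unfolding K_def using nu \<epsilon> by (intro mult_left_mono nn_integral_orthant_exp_le) auto
    finally show ?thesis .
  qed
  interpret pM: prob_space \<mu>M by (rule haar_stiefelD(1)[OF hM])
  interpret pV: prob_space \<mu>V by (rule haar_stiefelD(1)[OF hV])
  have "AE M in \<mu>M. (\<integral>\<^sup>+ V. \<integral>\<^sup>+ d. indicator pos_orthant d * ennreal (gdens \<mu>M e \<nu> \<Psi> M d V)
                       \<partial>lborel \<partial>\<mu>V) \<le> K"
    using haar_stiefelD(5)[OF hM]
  proof eventually_elim
    case (elim M)
    show ?case
      using haar_stiefelD(5)[OF hV] inner[OF elim]
      by (intro pV.nn_integral_le_const) (auto elim: eventually_mono)
  qed
  then have "(\<integral>\<^sup>+ M. \<integral>\<^sup>+ V. \<integral>\<^sup>+ d. indicator pos_orthant d *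
               ennreal (gdens \<mu>M e \<nu> \<Psi> M d V) \<partial>lborel \<partial>\<mu>V \<partial>\<mu>M) \<le> K"
    by (intro pM.nn_integral_le_const) auto
  also have "K < \<infinity>" by (simp add: K_def ennreal_mult_less_top)
  finally show ?thesis .
qed

lemma nn_integral_gdens_infinite:
  fixes \<mu>M :: "(real^'p^'n) measure" and \<mu>V :: "(real^'p^'p) measure"
  assumes e: "inj e" and hM: "haar_stiefel \<mu>M" and hV: "haar_stiefel \<mu>V"
    and nu: "0 < \<nu>" and s1: "1 < onorm (\<lambda>x. \<Psi> *v x)"
  shows "(\<integral>\<^sup>+ M. \<integral>\<^sup>+ V. \<integral>\<^sup>+ d. indicator pos_orthant d *
               ennreal (gdens \<mu>M e \<nu> \<Psi> M d V) \<partial>lborel \<partial>\<mu>V \<partial>\<mu>M) = \<infinity>"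
proof -
  obtain j0 and U :: "(real^'p^'n) set" and W :: "(real^'p^'p) set"
    where U: "open U" "U \<inter> stiefel \<noteq> {}" and W: "open W" "W \<inter> stiefel \<noteq> {}"
      and coeff: "\<And>M V. M \<in> U \<inter> stiefel \<Longrightarrow> V \<in> W \<inter> stiefel \<Longrightarrow> 1 \<le> trace_coeff \<Psi> M V j0"
    using trace_coeff_ge_1_near[OF s1 embedding_matrix_stiefel[OF e]] by metis
  have inner: "(\<integral>\<^sup>+ d. indicator pos_orthant d * ennreal (gdens \<mu>M e \<nu> \<Psi> M d V) \<partial>lborel) = \<infinity>"
    if "M \<in> U \<inter> stiefel" "V \<in> W \<inter> stiefel" for M V
    using gdens_ge[OF hM nu _ _ coeff[OF that]] that
    by (intro nn_integral_orthant_infinite[where k=j0]) auto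
  have "(\<integral>\<^sup>+ V. \<integral>\<^sup>+ d. indicator pos_orthant d * ennreal (gdens \<mu>M e \<nu> \<Psi> M d V) \<partial>lborel \<partial>\<mu>V) = \<infinity>"
    if "M \<in> U \<inter> stiefel" for M
    using haar_stiefel_sets_open[OF hV W(1)] haar_stiefel_open_pos[OF hV _ W(1)] W(2)
      haar_stiefelD(5)[OF hV] inner[OF that]
    by (intro nn_integral_infinite_if_infinite_on_pos_set[of W]) (auto elim: eventually_mono)
  then show ?thesis
    using haar_stiefel_sets_open[OF hM U(1)] haar_stiefel_open_pos[OF hM _ U(1)] U(2)
      haar_stiefelD(5)[OF hM]
    by (intro nn_integral_infinite_if_infinite_on_pos_set[of U]) (auto elim: eventually_mono)
qed

theorem theorem1:
  fixes \<mu>M :: "(real^'p^'n) measure" and \<mu>V :: "(real^'p^'p) measure"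
    and e :: "'p \<Rightarrow> 'n" and \<nu> :: real and \<Psi> :: "real^'p^'n"
  assumes "inj e"
    and "haar_stiefel \<mu>M" and "haar_stiefel \<mu>V"
    and "\<nu> > 0"
  shows "(onorm (\<lambda>x. \<Psi> *v x) < 1 \<longrightarrow>
           (\<integral>\<^sup>+ M. \<integral>\<^sup>+ V. \<integral>\<^sup>+ d. indicator pos_orthant d *
               ennreal (gdens \<mu>M e \<nu> \<Psi> M d V) \<partial>lborel \<partial>\<mu>V \<partial>\<mu>M) < \<infinity>)
       \<and> (onorm (\<lambda>x. \<Psi> *v x) > 1 \<longrightarrow>
           (\<integral>\<^sup>+ M. \<integral>\<^sup>+ V. \<integral>\<^sup>+ d. indicator pos_orthant d *
               ennreal (gdens \<mu>M e \<nu> \<Psi> M d V) \<partial>lborel \<partial>\<mu>V \<partial>\<mu>M) = \<infinity>)"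
  using nn_integral_gdens_finite[OF assms] nn_integral_gdens_infinite[OF assms] by blast

end
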